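(* Let $L=\mathbb Z\alpha_1\oplus\mathbb Z\alpha_2\oplus\mathbb Z\alpha_3$ with $\langle\alpha_i,\alpha_j\rangle=2\delta_{ij}$ and put $\beta_1=(\alpha_1+\alpha_2)/\sqrt2$, $\beta_2=(-\alpha_2+\alpha_3)/\sqrt2$, $\beta_3=(-\alpha_1+\alpha_2)/\sqrt2$ (simple roots of type $A_3$). With $w_\beta^{\pm}$, $s^i$, $\omega$, $\tau$ as in the context, one has in $V_L$: $\tau(s^1)=\frac18 w^+_{\beta_3}$, $\tau(s^2)=\frac1{10}(w^+_{\beta_3}+w^-_{\beta_2}+w^+_{\beta_2+\beta_3})$, $\tau(s^3)=\frac1{12}(w^+_{\beta_3}+w^-_{\beta_2}+w^+_{\beta_2+\beta_3}+w^-_{\beta_3}+w^-_{\beta_2+\beta_3}+w^+_{\beta_2})=\frac16(\beta_2(-1)^2+\beta_3(-1)^2+(\beta_2+\beta_3)(-1)^2)$, $\tau(\omega)=\omega$.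
   Context: $V_L=M(1)\otimes\mathbb C[L]=V_{\mathbb Z\alpha_1}\otimes V_{\mathbb Z\alpha_2}\otimes V_{\mathbb Z\alpha_3}$ is the lattice vertex operator algebra with trivial cocycle ($M(1)$ the Heisenberg Fock space of $\mathfrak h=\mathbb C\otimes L$, $e^\beta$ group algebra basis elements, $h(-1)$ the Heisenberg generators, $h(-1)^2$ meaning $h(-1)h(-1)\mathbf 1$). For a root $\beta$ of the $A_3$ root system $\Phi_3$ generated by $\beta_1,\beta_2,\beta_3$ (so $\sqrt2\beta\in L$), $w_\beta^{\pm}=\beta(-1)^2\pm2(e^{\sqrt2\beta}+e^{-\sqrt2\beta})$. Let $\Phi_1^+=\{\beta_1\}$, $\Phi_2^+=\{\beta_1,\beta_2,\beta_1+\beta_2\}$, $\Phi_3^+=\Phi_2^+\cup\{\beta_3,\beta_2+\beta_3,\beta_1+\beta_2+\beta_3\}$, $s^i=\frac1{2(i+3)}\sum_{\beta\in\Phi_i^+}w_\beta^-$ for $i=1,2,3$, and $\omega=\frac18\sum_{\beta\in\Phi_3^+}\beta(-1)^2$ (the Virasoro element). For $\langle\alpha,\alpha\rangle=2$, $\sigma$ is the unique vertex operator algebra automorphism of $V_{\mathbb Z\alpha}$ whose restriction to the weight-one Lie algebra $\mathrm{span}\{\alpha(-1),e^{\alpha},e^{-\alpha}\}\cong sl_2(\mathbb C)$ is $\alpha(-1)\mapsto e^\alpha+e^{-\alpha}$, $e^\alpha+e^{-\alpha}\mapsto\alpha(-1)$, $e^\alpha-e^{-\alpha}\mapsto-(e^\alpha-e^{-\alpha})$;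 and $\tau=\sigma\otimes\sigma\otimes\sigma$ on $V_L$. *)

theory Defs
  imports Complex_Main "HOL-Library.Poly_Mapping" "HOL-Library.Multiset" "HOL-Library.Function_Algebras"
begin

text \<open>Concrete model of the lattice VOA V_L, L = Z a1 + Z a2 + Z a3, <ai,aj> = 2 delta_ij,
 with trivial cocycle.  A basis vector of V_L = M(1) (x) C[L] is a pair (M, g):
 M is a multiset of pairs (i,n), n >= 1, standing for the monomial prod ai(-n)
 applied to the vacuum, and g :: idx => int is the lattice vector sum g(i) ai (e^g).\<close>

datatype idx = A1 | A2 | A3

definition idxs :: "idx set" where "idxs = {A1, A2, A3}"

type_synonym lat = "idx \<Rightarrow> int"
type_synonym mono = "(idx \<times> nat) multiset"
type_synonym bas = "mono \<times> lat"
type_synonym vl = "bas \<Rightarrow>\<^sub>0 complex"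

definition ip :: "lat \<Rightarrow> lat \<Rightarrow> int" where
  "ip l m = 2 * (\<Sum>i\<in>idxs. l i * m i)"

definition unitlat :: "idx \<Rightarrow> lat" where
  "unitlat i = (\<lambda>j. if j = i then 1 else 0)"

definition smul :: "complex \<Rightarrow> vl \<Rightarrow> vl" where
  "smul c v = Poly_Mapping.map (\<lambda>x. c * x) v"

definition bv :: "mono \<Rightarrow> lat \<Rightarrow> vl" where
  "bv M g = Poly_Mapping.single (M, g) 1"

definition lin :: "(bas \<Rightarrow> vl) \<Rightarrow> vl \<Rightarrow> vl" where
  "lin f v = (\<Sum>b\<in>Poly_Mapping.keys v. smul (Poly_Mapping.lookup v b) (f b))"

definition vac :: vl where "vac = bv {#} 0"

definition wt :: "mono \<Rightarrow> nat" where "wt M = sum_mset (image_mset snd M)"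

text \<open>Heisenberg operator ai(m): [ai(m), aj(n)] = 2 m delta_ij delta_{m+n,0};
 ai(0) acts on e^g by <ai,g> = 2 g(i).\<close>
definition hb :: "idx \<Rightarrow> int \<Rightarrow> bas \<Rightarrow> vl" where
  "hb i m b = (case b of (M, g) \<Rightarrow>
     if m < 0 then bv (add_mset (i, nat (- m)) M) g
     else if m = 0 then smul (of_int (2 * g i)) (bv M g)
     else smul (of_int (2 * m * int (count M (i, nat m)))) (bv (M - {#(i, nat m)#}) g))"

definition hmode :: "idx \<Rightarrow> int \<Rightarrow> vl \<Rightarrow> vl" where
  "hmode i m = lin (hb i m)"

definition hlat :: "lat \<Rightarrow> int \<Rightarrow> vl \<Rightarrow> vl" where
  "hlat l m v = (\<Sum>i\<in>idxs. smul (of_int (l i)) (hmode i m v))"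

text \<open>Coefficients S_j of z^j in exp(sum_{n>=1} X_n z^n / n) for commuting X_n,
 via j S_j = sum_{n=1}^j X_n S_{j-n}.\<close>
primrec Slist :: "(nat \<Rightarrow> vl \<Rightarrow> vl) \<Rightarrow> nat \<Rightarrow> (vl \<Rightarrow> vl) list" where
  "Slist X 0 = [id]"
| "Slist X (Suc j) = Slist X j @
     [\<lambda>v. smul (1 / of_nat (Suc j)) (\<Sum>n\<in>{1..Suc j}. X n ((Slist X j ! (Suc j - n)) v))]"

definition Sop :: "(nat \<Rightarrow> vl \<Rightarrow> vl) \<Rightarrow> nat \<Rightarrow> vl \<Rightarrow> vl" where
  "Sop X j = Slist X j ! j"

text \<open>Modes of Y(e^b, z) = E^-(-b,z) E^+(-b,z) e^b z^b = sum_n (e^b)_n z^(-n-1),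
 trivial cocycle.\<close>
definition eb :: "lat \<Rightarrow> int \<Rightarrow> bas \<Rightarrow> vl" where
  "eb l n b = (case b of (M, g) \<Rightarrow>
     (\<Sum>k\<in>{0..wt M}.
        (let j = int k - n - 1 - ip l g in
         if j < 0 then 0
         else Sop (\<lambda>m. hlat l (- int m)) (nat j)
                (Sop (\<lambda>m. \<lambda>v. - hlat l (int m) v) k (bv M (g + l))))))"

definition emode :: "lat \<Rightarrow> int \<Rightarrow> vl \<Rightarrow> vl" where
  "emode l n = lin (eb l n)"

definition hstate :: "idx \<Rightarrow> vl" where "hstate i = bv {#(i, 1)#} 0"
definition estate :: "lat \<Rightarrow> vl" where "estate l = bv {#} l"

text \<open>the weight-one space (V_L)_1 = span {ai(-1)1, e^{+-ai}}, and the
 modes a_n of a weight-one vector a (vertex operator Y(a,z) = sum a_n z^(-n-1))\<close>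
definition V1 :: "vl set" where
  "V1 = {a. Poly_Mapping.keys a \<subseteq>
          {({#(i, 1)#}, 0) | i. True} \<union> {({#}, unitlat i) | i. True}
          \<union> {({#}, - unitlat i) | i. True}}"

definition Y1 :: "vl \<Rightarrow> int \<Rightarrow> vl \<Rightarrow> vl" where
  "Y1 a n v = (\<Sum>i\<in>idxs.
      smul (Poly_Mapping.lookup a ({#(i, 1)#}, 0)) (hmode i n v)
    + smul (Poly_Mapping.lookup a ({#}, unitlat i)) (emode (unitlat i) n v)
    + smul (Poly_Mapping.lookup a ({#}, - unitlat i)) (emode (- unitlat i) n v))"

text \<open>Elements of h = C (x) L written in coordinates w.r.t. a1,a2,a3.\<close>
type_synonym hv = "idx \<Rightarrow> complex"

definition hsq :: "hv \<Rightarrow> vl" where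
  "hsq h = (\<Sum>i\<in>idxs. \<Sum>j\<in>idxs. smul (h i * h j) (bv {#(i, 1), (j, 1)#} 0))"

text \<open>the lattice vector sqrt 2 * beta (for a root beta of A_3)\<close>
definition sqrt2lat :: "hv \<Rightarrow> lat" where
  "sqrt2lat h = (\<lambda>i. THE k::int. of_int k = complex_of_real (sqrt 2) * h i)"

definition wplus :: "hv \<Rightarrow> vl" where
  "wplus h = hsq h + smul 2 (estate (sqrt2lat h) + estate (- sqrt2lat h))"
definition wminus :: "hv \<Rightarrow> vl" where
  "wminus h = hsq h - smul 2 (estate (sqrt2lat h) + estate (- sqrt2lat h))"

definition r2 :: complex where "r2 = complex_of_real (sqrt 2)"

definition beta1 :: hv where
  "beta1 = (\<lambda>i. case i of A1 \<Rightarrow> 1 / r2 | A2 \<Rightarrow> 1 / r2 | A3 \<Rightarrow> 0)"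
definition beta2 :: hv where
  "beta2 = (\<lambda>i. case i of A1 \<Rightarrow> 0 | A2 \<Rightarrow> - 1 / r2 | A3 \<Rightarrow> 1 / r2)"
definition beta3 :: hv where
  "beta3 = (\<lambda>i. case i of A1 \<Rightarrow> - 1 / r2 | A2 \<Rightarrow> 1 / r2 | A3 \<Rightarrow> 0)"

definition Phi :: "nat \<Rightarrow> hv list" where
  "Phi k = (if k = 1 then [beta1]
            else if k = 2 then [beta1, beta2, beta1 + beta2]
            else [beta1, beta2, beta1 + beta2, beta3, beta2 + beta3, beta1 + beta2 + beta3])"

definition sS :: "nat \<Rightarrow> vl" where
  "sS k = smul (1 / (2 * (of_nat k + 3))) (sum_list (map wminus (Phi k)))"

definition omega :: vl where
  "omega = smul (1 / 8) (sum_list (map hsq (Phi 3)))"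

end

theory Submission
  imports Defs
begin

(* Write a_i for alpha_i and E(+-)_ij = e^(a_i +- a_j) + e^-(a_i +- a_j). All states involved are
   combinations of the a_i(-1)a_j(-1)1 and the E(+-)_ij, and each of these is a (-1)-product of
   weight-one states, on which tau is prescribed: a_i(-1)a_j(-1)1 is the product of a_i(-1)1 and
   a_j(-1)1; for i ~= j the product of e^a_i + e^-a_i and e^a_j + e^-a_j is E(+)_ij + E(-)_ij and
   that of e^a_i - e^-a_i and e^a_j - e^-a_j is E(+)_ij - E(-)_ij; the square of e^a_i + e^-a_i
   is a_i(-1)^2 1. Hence tau fixes a_i(-1)^2 1 and E(+)_ij - E(-)_ij (the two sign changes of
   sigma cancel) and exchanges a_i(-1)a_j(-1)1 with E(+)_ij + E(-)_ij. For the roots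
   b = (a_i + a_j)/sqrt 2 and b' = (a_j - a_i)/sqrt 2 this yields tau(w-_b) = w+_b',
   tau(w-_b') = w-_b' and tau(b(-1)^2 + b'(-1)^2) = b(-1)^2 + b'(-1)^2. The positive roots of
   A_3 split into three such pairs, and the identities follow by summation. *)

lemma lookup_smul [simp]: "Poly_Mapping.lookup (smul c v) x = c * Poly_Mapping.lookup v x"
  by (simp add: smul_def map.rep_eq when_def)

lemma smul_zero_left [simp]: "smul 0 v = 0"
  by (rule poly_mapping_eqI) simp

lemma smul_one [simp]: "smul 1 v = v"
  by (rule poly_mapping_eqI) simp

lemma smul_smul [simp]: "smul c (smul d v) = smul (c * d) v"
  by (rule poly_mapping_eqI) simp

lemma smul_uminus_left: "smul (- c) v = - smul c v"
  by (rule poly_mapping_eqI) simp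

lemma smul_uminus_right: "smul c (- v) = - smul c v"
  by (rule poly_mapping_eqI) simp

lemma smul_add_left: "smul (c + d) v = smul c v + smul d v"
  by (rule poly_mapping_eqI) (simp add: lookup_add algebra_simps)

lemma smul_sum: "smul c (sum f A) = (\<Sum>x\<in>A. smul c (f x))"
  by (rule poly_mapping_eqI) (simp add: lookup_sum sum_distrib_left)

lemma smul_minus_one: "smul (- 1) v = - v"
  by (rule poly_mapping_eqI) simp

lemma lin_eq_sum_superset:
  assumes "finite S" "Poly_Mapping.keys v \<subseteq> S"
  shows "lin f v = (\<Sum>b\<in>S. smul (Poly_Mapping.lookup v b) (f b))"
  unfolding lin_def
  by (rule sum.mono_neutral_left) (use assms in \<open>auto simp: in_keys_iff\<close>)

lemma lin_add: "lin f (u + v) = lin f u + lin f v"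
proof -
  let ?S = "Poly_Mapping.keys u \<union> Poly_Mapping.keys v"
  have "lin f (u + v) = (\<Sum>b\<in>?S. smul (Poly_Mapping.lookup (u + v) b) (f b))"
    by (rule lin_eq_sum_superset) (auto simp: in_keys_iff lookup_add)
  also have "\<dots> = (\<Sum>b\<in>?S. smul (Poly_Mapping.lookup u b) (f b))
                 + (\<Sum>b\<in>?S. smul (Poly_Mapping.lookup v b) (f b))"
    by (simp add: lookup_add smul_add_left sum.distrib)
  also have "\<dots> = lin f u + lin f v"
    by (simp add: lin_eq_sum_superset[symmetric])
  finally show ?thesis .
qed

lemma lin_smul: "lin f (smul c v) = smul c (lin f v)"
proof -
  have "lin f (smul c v)
      = (\<Sum>b\<in>Poly_Mapping.keys v. smul (Poly_Mapping.lookup (smul c v) b) (f b))"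
    by (rule lin_eq_sum_superset) (auto simp: in_keys_iff)
  then show ?thesis
    by (simp add: lin_def smul_sum)
qed

lemma lin_uminus: "lin f (- v) = - lin f v"
  by (metis lin_smul smul_minus_one)

lemma lin_diff: "lin f (u - v) = lin f u - lin f v"
  by (metis diff_conv_add_uminus lin_add lin_uminus)

lemma lin_bv [simp]: "lin f (bv M g) = f (M, g)"
  by (simp add: lin_def bv_def)

lemma sum_idxs: "(\<Sum>i\<in>idxs. f i) = f A1 + f A2 + f A3"
  by (simp add: idxs_def add.assoc)

lemma ip_unitlat: "ip (unitlat i) (unitlat j) = (if i = j then 2 else 0)"
  by (cases i; cases j) (simp_all add: ip_def sum_idxs unitlat_def)

lemma ip_uminus_left: "ip (- l) m = - ip l m"
  and ip_uminus_right: "ip l (- m) = - ip l m"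
  by (simp_all add: ip_def sum_idxs)

lemma unitlat_eq_iff: "unitlat i = unitlat j \<longleftrightarrow> i = j"
  by (cases i; cases j) (auto simp: unitlat_def fun_eq_iff)

lemma unitlat_neq_uminus: "unitlat i \<noteq> - unitlat j"
  by (cases i; cases j) (auto simp: unitlat_def fun_eq_iff)

lemma hlat_unitlat: "hlat (unitlat i) m v = hmode i m v"
  by (cases i) (simp_all add: hlat_def sum_idxs unitlat_def)

lemma hlat_uminus_unitlat: "hlat (- unitlat i) m v = - hmode i m v"
  by (cases i) (simp_all add: hlat_def sum_idxs unitlat_def smul_minus_one)

lemma hmode_uminus: "hmode i m (- v) = - hmode i m v"
  by (simp add: hmode_def lin_uminus)

lemma hmode_bv_neg: "0 < m \<Longrightarrow> hmode i (- int m) (bv M g) = bv (add_mset (i, m) M) g"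
  by (simp add: hmode_def hb_def)

lemma emode_add: "emode l n (u + v) = emode l n u + emode l n v"
  by (simp add: emode_def lin_add)

lemma emode_diff: "emode l n (u - v) = emode l n u - emode l n v"
  by (simp add: emode_def lin_diff)

lemma emode_uminus: "emode l n (- v) = - emode l n v"
  by (simp add: emode_def lin_uminus)

lemma Sop_0 [simp]: "Sop X 0 = id"
  by (simp add: Sop_def)

lemma emode_minus_one_estate:
  "emode l (-1) (estate m) =
     (if 0 < ip l m then 0
      else Sop (\<lambda>k. hlat l (- int k)) (nat (- ip l m)) (estate (m + l)))"
  by (simp add: emode_def eb_def estate_def wt_def)

lemma emode_minus_one_estate_orth:
  "ip l m = 0 \<Longrightarrow> emode l (-1) (estate m) = estate (m + l)"
  by (simp add: emode_minus_one_estate Sop_def)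

lemma emode_minus_one_estate_pos: "0 < ip l m \<Longrightarrow> emode l (-1) (estate m) = 0"
  by (simp add: emode_minus_one_estate)

lemma emode_minus_one_estate_opposite:
  "ip l m = -2 \<Longrightarrow> emode l (-1) (estate m) =
     smul (1/2) (hlat l (-1) (hlat l (-1) (estate (m + l))) + hlat l (-2) (estate (m + l)))"
  by (simp add: emode_minus_one_estate Sop_def numeral_2_eq_2 nth_append)

definition hstate2 :: "idx \<Rightarrow> idx \<Rightarrow> vl" where
  "hstate2 i j = bv {#(i, 1), (j, 1)#} 0"

definition esym :: "lat \<Rightarrow> vl" where
  "esym l = estate l + estate (- l)"

definition eanti :: "lat \<Rightarrow> vl" where
  "eanti l = estate l - estate (- l)"

lemma hstate2_commute: "hstate2 i j = hstate2 j i"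
  by (simp add: hstate2_def add_mset_commute)

lemma hstate_in_V1: "hstate i \<in> V1"
  by (auto simp: V1_def hstate_def bv_def)

lemma esym_in_V1: "esym (unitlat i) \<in> V1"
  using keys_add[of "estate (unitlat i)" "estate (- unitlat i)"]
  by (auto simp: V1_def esym_def estate_def bv_def)

lemma eanti_in_V1: "eanti (unitlat i) \<in> V1"
  using keys_diff[of "estate (unitlat i)" "estate (- unitlat i)"]
  by (auto simp: V1_def eanti_def estate_def bv_def)

lemmas V1_basis_simps = lookup_add lookup_minus bv_def lookup_single estate_def hstate_def
  unitlat_eq_iff unitlat_neq_uminus unitlat_neq_uminus[symmetric]

lemma Y1_hstate: "Y1 (hstate i) n v = hmode i n v"
  by (cases i) (simp_all add: Y1_def sum_idxs V1_basis_simps)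

lemma Y1_esym: "Y1 (esym (unitlat i)) n v = emode (unitlat i) n v + emode (- unitlat i) n v"
  by (cases i) (simp_all add: Y1_def sum_idxs esym_def V1_basis_simps)

lemma Y1_eanti: "Y1 (eanti (unitlat i)) n v = emode (unitlat i) n v - emode (- unitlat i) n v"
  by (cases i) (simp_all add: Y1_def sum_idxs eanti_def V1_basis_simps smul_minus_one)

lemma Y1_uminus_left: "Y1 (- a) n v = - Y1 a n v"
  by (simp add: Y1_def smul_uminus_left sum_negf[symmetric] algebra_simps)

lemma Y1_uminus_right: "Y1 a n (- v) = - Y1 a n v"
  by (simp add: Y1_def hmode_uminus emode_uminus smul_uminus_right sum_negf[symmetric]
      algebra_simps)

lemma Y1_hstate_hstate: "Y1 (hstate i) (-1) (hstate j) = hstate2 i j"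
  unfolding Y1_hstate using hmode_bv_neg[of 1 i "{#(j, 1)#}" 0]
  by (simp add: hstate_def hstate2_def)

lemma ip_signed_unitlat:
  "i \<noteq> j \<Longrightarrow> ip (unitlat i) (unitlat j) = 0"
  "i \<noteq> j \<Longrightarrow> ip (- unitlat i) (unitlat j) = 0"
  "i \<noteq> j \<Longrightarrow> ip (unitlat i) (- unitlat j) = 0"
  "i \<noteq> j \<Longrightarrow> ip (- unitlat i) (- unitlat j) = 0"
  "ip (unitlat i) (unitlat i) = 2"
  "ip (- unitlat i) (- unitlat i) = 2"
  "ip (unitlat i) (- unitlat i) = -2"
  "ip (- unitlat i) (unitlat i) = -2"
  by (simp_all add: ip_unitlat ip_uminus_left ip_uminus_right)

lemma Y1_esym_esym_same: "Y1 (esym (unitlat i)) (-1) (esym (unitlat i)) = hstate2 i i"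
proof -
  let ?q = "bv {#(i, 1), (i, 1)#} 0" and ?r = "bv {#(i, 2)#} 0"
  \<comment> \<open>The products of e^a_i with e^a_i and of e^-a_i with e^-a_i vanish; the two mixed ones
    are (a_i(-1)^2 +- a_i(-2))1/2, so the a_i(-2) terms cancel.\<close>
  have "Y1 (esym (unitlat i)) (-1) (esym (unitlat i))
      = smul (1/2) (?q + ?r) + smul (1/2) (?q + - ?r)"
    unfolding Y1_esym unfolding esym_def emode_add
    using hmode_bv_neg[of 1 i] hmode_bv_neg[of 2 i]
    by (simp add: emode_minus_one_estate_pos emode_minus_one_estate_opposite ip_signed_unitlat
        hlat_unitlat hlat_uminus_unitlat hmode_uminus) (simp add: estate_def)
  also have "\<dots> = ?q"
    by (rule poly_mapping_eqI) (simp add: lookup_add lookup_minus algebra_simps)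
  finally show ?thesis
    by (simp add: hstate2_def)
qed

lemma Y1_esym_esym:
  "i \<noteq> j \<Longrightarrow> Y1 (esym (unitlat i)) (-1) (esym (unitlat j))
     = esym (unitlat i + unitlat j) + esym (unitlat j - unitlat i)"
  unfolding Y1_esym
  by (simp add: esym_def emode_add emode_minus_one_estate_orth ip_signed_unitlat algebra_simps)

lemma Y1_eanti_eanti:
  "i \<noteq> j \<Longrightarrow> Y1 (eanti (unitlat i)) (-1) (eanti (unitlat j))
     = esym (unitlat i + unitlat j) - esym (unitlat j - unitlat i)"
  unfolding Y1_eanti
  by (simp add: esym_def eanti_def emode_diff emode_minus_one_estate_orth ip_signed_unitlat
      algebra_simps)

definition hvec :: "lat \<Rightarrow> hv" where
  "hvec l = (\<lambda>k. of_int (l k) / r2)"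

lemma r2_nonzero: "r2 \<noteq> 0"
  by (simp add: r2_def)

lemma r2_square: "r2 * r2 = 2"
  by (simp add: r2_def flip: of_real_mult)

lemma sqrt2lat_hvec [simp]: "sqrt2lat (hvec l) = l"
  unfolding sqrt2lat_def hvec_def
  by (rule ext, rule the_equality) (auto simp: r2_def[symmetric] r2_nonzero)

lemma hsq_eq_sum_hstate2:
  "hsq h = (\<Sum>i\<in>idxs. \<Sum>j\<in>idxs. smul (h i * h j) (hstate2 i j))"
  by (simp add: hsq_def hstate2_def)

lemma hsq_hvec_add:
  "i \<noteq> j \<Longrightarrow> hsq (hvec (unitlat i + unitlat j))
     = smul (1/2) (hstate2 i i + hstate2 j j) + hstate2 i j"
  by (rule poly_mapping_eqI, cases i; cases j)
    (simp_all add: hsq_eq_sum_hstate2 sum_idxs lookup_add lookup_sum hvec_def unitlat_def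
      r2_square hstate2_commute)

lemma hsq_hvec_diff:
  "i \<noteq> j \<Longrightarrow> hsq (hvec (unitlat j - unitlat i))
     = smul (1/2) (hstate2 i i + hstate2 j j) - hstate2 i j"
  by (rule poly_mapping_eqI, cases i; cases j)
    (simp_all add: hsq_eq_sum_hstate2 sum_idxs lookup_add lookup_minus lookup_sum hvec_def
      unitlat_def r2_square hstate2_commute)

lemma wplus_eq_esym: "wplus h = hsq h + smul 2 (esym (sqrt2lat h))"
  by (simp add: wplus_def esym_def)

lemma wminus_eq_esym: "wminus h = hsq h - smul 2 (esym (sqrt2lat h))"
  by (simp add: wminus_def esym_def)

lemma A3_roots_eq_hvec:
  "beta1 = hvec (unitlat A1 + unitlat A2)"
  "beta2 = hvec (unitlat A3 - unitlat A2)"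
  "beta3 = hvec (unitlat A2 - unitlat A1)"
  "beta1 + beta2 = hvec (unitlat A1 + unitlat A3)"
  "beta2 + beta3 = hvec (unitlat A3 - unitlat A1)"
  "beta1 + beta2 + beta3 = hvec (unitlat A2 + unitlat A3)"
  by (simp_all add: fun_eq_iff hvec_def unitlat_def beta1_def beta2_def beta3_def split: idx.split)

locale lifted_sigma =
  fixes tau :: "vl \<Rightarrow> vl"
  assumes add: "tau (u + v) = tau u + tau v"
    and hom: "tau (smul c v) = smul c (tau v)"
    and modes: "a \<in> V1 \<Longrightarrow> tau (Y1 a n v) = Y1 (tau a) n (tau v)"
    and tau_hstate: "tau (hstate i) = esym (unitlat i)"
    and tau_esym: "tau (esym (unitlat i)) = hstate i"
    and tau_eanti: "tau (eanti (unitlat i)) = - eanti (unitlat i)"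
begin

lemma tau_uminus: "tau (- v) = - tau v"
  using hom[of "- 1" v] by (simp add: smul_minus_one)

lemma tau_diff: "tau (u - v) = tau u - tau v"
  by (metis diff_conv_add_uminus add tau_uminus)

lemma tau_fixed_add: "tau u = u \<Longrightarrow> tau v = v \<Longrightarrow> tau (u + v) = u + v"
  by (simp add: add)

lemma tau_hstate2: "tau (hstate2 i j) = Y1 (esym (unitlat i)) (-1) (esym (unitlat j))"
  using modes[OF hstate_in_V1, of i "-1" "hstate j"] by (simp add: Y1_hstate_hstate tau_hstate)

lemma tau_Y1_esym_esym: "tau (Y1 (esym (unitlat i)) (-1) (esym (unitlat j))) = hstate2 i j"
  using modes[OF esym_in_V1] by (simp add: tau_esym Y1_hstate_hstate)

lemma tau_Y1_eanti_eanti: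
  "tau (Y1 (eanti (unitlat i)) (-1) (eanti (unitlat j)))
     = Y1 (eanti (unitlat i)) (-1) (eanti (unitlat j))"
  using modes[OF eanti_in_V1] by (simp add: tau_eanti Y1_uminus_left Y1_uminus_right)

lemma tau_hstate2_same: "tau (hstate2 i i) = hstate2 i i"
  by (simp add: tau_hstate2 Y1_esym_esym_same)

lemma tau_hstate2_distinct:
  "i \<noteq> j \<Longrightarrow>
    tau (hstate2 i j) = esym (unitlat i + unitlat j) + esym (unitlat j - unitlat i)"
  by (simp add: tau_hstate2 Y1_esym_esym)

lemma tau_esym_add:
  assumes "i \<noteq> j"
  shows "tau (esym (unitlat i + unitlat j))
    = smul (1/2) (hstate2 i j + (esym (unitlat i + unitlat j) - esym (unitlat j - unitlat i)))"
proof -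
  let ?P = "Y1 (esym (unitlat i)) (-1) (esym (unitlat j))"
    and ?M = "Y1 (eanti (unitlat i)) (-1) (eanti (unitlat j))"
  have "esym (unitlat i + unitlat j) = smul (1/2) (?P + ?M)"
    unfolding Y1_esym_esym[OF assms] Y1_eanti_eanti[OF assms]
    by (rule poly_mapping_eqI) (simp add: lookup_add lookup_minus)
  then have "tau (esym (unitlat i + unitlat j)) = smul (1/2) (hstate2 i j + ?M)"
    by (simp only: hom add tau_Y1_esym_esym tau_Y1_eanti_eanti)
  then show ?thesis
    by (simp only: Y1_eanti_eanti[OF assms])
qed

lemma tau_esym_diff:
  assumes "i \<noteq> j"
  shows "tau (esym (unitlat j - unitlat i))
    = smul (1/2) (hstate2 i j - (esym (unitlat i + unitlat j) - esym (unitlat j - unitlat i)))"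
proof -
  let ?P = "Y1 (esym (unitlat i)) (-1) (esym (unitlat j))"
    and ?M = "Y1 (eanti (unitlat i)) (-1) (eanti (unitlat j))"
  have "esym (unitlat j - unitlat i) = smul (1/2) (?P - ?M)"
    unfolding Y1_esym_esym[OF assms] Y1_eanti_eanti[OF assms]
    by (rule poly_mapping_eqI) (simp add: lookup_add lookup_minus)
  then have "tau (esym (unitlat j - unitlat i)) = smul (1/2) (hstate2 i j - ?M)"
    by (simp only: hom tau_diff tau_Y1_esym_esym tau_Y1_eanti_eanti)
  then show ?thesis
    by (simp only: Y1_eanti_eanti[OF assms])
qed

lemma tau_hsq_hvec_add:
  "i \<noteq> j \<Longrightarrow> tau (hsq (hvec (unitlat i + unitlat j)))
     = smul (1/2) (hstate2 i i + hstate2 j j)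
       + (esym (unitlat i + unitlat j) + esym (unitlat j - unitlat i))"
  by (simp add: hsq_hvec_add hom add tau_hstate2_same tau_hstate2_distinct)

lemma tau_hsq_hvec_diff:
  "i \<noteq> j \<Longrightarrow> tau (hsq (hvec (unitlat j - unitlat i)))
     = smul (1/2) (hstate2 i i + hstate2 j j)
       - (esym (unitlat i + unitlat j) + esym (unitlat j - unitlat i))"
  by (simp add: hsq_hvec_diff hom add tau_diff tau_hstate2_same tau_hstate2_distinct)

lemma tau_wminus_hvec_add:
  assumes "i \<noteq> j"
  shows "tau (wminus (hvec (unitlat i + unitlat j))) = wplus (hvec (unitlat j - unitlat i))"
proof -
  have "tau (wminus (hvec (unitlat i + unitlat j)))
      = tau (hsq (hvec (unitlat i + unitlat j))) - smul 2 (tau (esym (unitlat i + unitlat j)))"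
    by (simp add: wminus_eq_esym tau_diff hom)
  also have "\<dots> = wplus (hvec (unitlat j - unitlat i))"
    unfolding tau_hsq_hvec_add[OF assms] tau_esym_add[OF assms]
    unfolding wplus_eq_esym hsq_hvec_diff[OF assms] sqrt2lat_hvec
    by (rule poly_mapping_eqI) (simp add: lookup_add lookup_minus)
  finally show ?thesis .
qed

lemma tau_wminus_hvec_diff:
  assumes "i \<noteq> j"
  shows "tau (wminus (hvec (unitlat j - unitlat i))) = wminus (hvec (unitlat j - unitlat i))"
proof -
  have "tau (wminus (hvec (unitlat j - unitlat i)))
      = tau (hsq (hvec (unitlat j - unitlat i))) - smul 2 (tau (esym (unitlat j - unitlat i)))"
    by (simp add: wminus_eq_esym tau_diff hom)
  also have "\<dots> = wminus (hvec (unitlat j - unitlat i))"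
    unfolding tau_hsq_hvec_diff[OF assms] tau_esym_diff[OF assms]
    unfolding wminus_eq_esym hsq_hvec_diff[OF assms] sqrt2lat_hvec
    by (rule poly_mapping_eqI) (simp add: lookup_add lookup_minus)
  finally show ?thesis .
qed

lemma tau_hsq_hvec_add_diff:
  assumes "i \<noteq> j"
  shows "tau (hsq (hvec (unitlat i + unitlat j)) + hsq (hvec (unitlat j - unitlat i)))
     = hsq (hvec (unitlat i + unitlat j)) + hsq (hvec (unitlat j - unitlat i))"
  unfolding add tau_hsq_hvec_add[OF assms] tau_hsq_hvec_diff[OF assms]
  unfolding hsq_hvec_add[OF assms] hsq_hvec_diff[OF assms]
  by (rule poly_mapping_eqI) (simp add: lookup_add lookup_minus)

lemma tau_wminus_A3_roots:
  "tau (wminus beta1) = wplus beta3"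
  "tau (wminus (beta1 + beta2)) = wplus (beta2 + beta3)"
  "tau (wminus (beta1 + beta2 + beta3)) = wplus beta2"
  "tau (wminus beta2) = wminus beta2"
  "tau (wminus beta3) = wminus beta3"
  "tau (wminus (beta2 + beta3)) = wminus (beta2 + beta3)"
  using tau_wminus_hvec_add[of A1 A2] tau_wminus_hvec_add[of A1 A3] tau_wminus_hvec_add[of A2 A3]
    tau_wminus_hvec_diff[of A2 A3] tau_wminus_hvec_diff[of A1 A2] tau_wminus_hvec_diff[of A1 A3]
  by (simp_all add: A3_roots_eq_hvec[symmetric])

lemma tau_hsq_A3_roots:
  "tau (hsq beta1 + hsq beta3) = hsq beta1 + hsq beta3"
  "tau (hsq (beta1 + beta2) + hsq (beta2 + beta3)) = hsq (beta1 + beta2) + hsq (beta2 + beta3)"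
  "tau (hsq (beta1 + beta2 + beta3) + hsq beta2) = hsq (beta1 + beta2 + beta3) + hsq beta2"
  using tau_hsq_hvec_add_diff[of A1 A2] tau_hsq_hvec_add_diff[of A1 A3]
    tau_hsq_hvec_add_diff[of A2 A3]
  by (simp_all add: A3_roots_eq_hvec[symmetric])

lemma tau_sS:
  "tau (sS 1) = smul (1 / 8) (wplus beta3)"
  "tau (sS 2) = smul (1 / 10) (wplus beta3 + wminus beta2 + wplus (beta2 + beta3))"
  "tau (sS 3) = smul (1 / 12) (wplus beta3 + wminus beta2 + wplus (beta2 + beta3)
                  + wminus beta3 + wminus (beta2 + beta3) + wplus beta2)"
  by (simp_all add: sS_def Phi_def hom add tau_wminus_A3_roots) (simp_all only: add.assoc)

lemma tau_sS_3_eq_hsq: "tau (sS 3) = smul (1 / 6) (hsq beta2 + hsq beta3 + hsq (beta2 + beta3))"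
  unfolding tau_sS(3)
  by (rule poly_mapping_eqI) (simp add: wplus_def wminus_def lookup_add lookup_minus)

lemma tau_omega: "tau omega = omega"
proof -
  have "sum_list (map hsq (Phi 3)) = (hsq beta1 + hsq beta3)
      + (hsq (beta1 + beta2) + hsq (beta2 + beta3)) + (hsq (beta1 + beta2 + beta3) + hsq beta2)"
    by (simp add: Phi_def ac_simps)
  then have "tau (sum_list (map hsq (Phi 3))) = sum_list (map hsq (Phi 3))"
    by (simp only: tau_fixed_add tau_hsq_A3_roots)
  then show ?thesis
    by (simp only: omega_def hom)
qed

end

theorem lemma3p5:
  fixes tau :: "vl \<Rightarrow> vl"
  assumes add: "\<And>u v. tau (u + v) = tau u + tau v"
    and hom: "\<And>c v. tau (smul c v) = smul c (tau v)"
    and vacuum: "tau vac = vac"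
    and modes: "\<And>a n v. a \<in> V1 \<Longrightarrow> tau (Y1 a n v) = Y1 (tau a) n (tau v)"
    and sig1: "\<And>i. tau (hstate i) = estate (unitlat i) + estate (- unitlat i)"
    and sig2: "\<And>i. tau (estate (unitlat i) + estate (- unitlat i)) = hstate i"
    and sig3: "\<And>i. tau (estate (unitlat i) - estate (- unitlat i))
                    = - (estate (unitlat i) - estate (- unitlat i))"
  shows "tau (sS 1) = smul (1 / 8) (wplus beta3)
    \<and> tau (sS 2) = smul (1 / 10) (wplus beta3 + wminus beta2 + wplus (beta2 + beta3))
    \<and> tau (sS 3) = smul (1 / 12) (wplus beta3 + wminus beta2 + wplus (beta2 + beta3)
                        + wminus beta3 + wminus (beta2 + beta3) + wplus beta2)
    \<and> tau (sS 3) = smul (1 / 6) (hsq beta2 + hsq beta3 + hsq (beta2 + beta3))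
    \<and> tau omega = omega"
proof -
  interpret lifted_sigma tau
    by unfold_locales
      (fact add hom modes sig1[folded esym_def] sig2[folded esym_def] sig3[folded eanti_def])+
  show ?thesis
    using tau_sS tau_sS_3_eq_hsq tau_omega by blast
qed

end
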